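(* Let $f\in\mathcal{CM}$ with $\omega_0=\omega_0^f>-\infty$, and define $g:(0,\infty)\to\mathbb{R}$ by $g(\lambda):=f_e(\lambda+\omega_0)$. Assume that $g$ (which is completely monotone) satisfies: its representing measure has a density $(0,\infty)\to(0,\infty)$; there is $\lambda_0>0$ with $\frac{(-\lambda)^n g^{(n)}(\lambda)}{n!}\ge\frac{(-\lambda)^{n+1}g^{(n+1)}(\lambda)}{(n+1)!}$ for all $n\in\mathbb{N}\cup\{0\}$, $\lambda>\lambda_0$; and $\lim_{\lambda\to\infty}g(\lambda)=0$. Then the representing measure of $f$ has a density $\nu(t)$ such that $t\mapsto e^{-\omega_0 t}\nu(t)$ is non-increasing on $(0,\infty)$.
   Context: A function $f:(0,\infty)\to\mathbb{R}$ is completely monotone, $f\in\mathcal{CM}$, if it is $C^\infty$ and $(-1)^n f^{(n)}(\lambda)\ge0$ for all $n\ge0$, $\lambda>0$; its representing measure is the unique measure $\nu$ on $[0,\infty)$ with $f(\lambda)=\int_{[0,\infty)}e^{-\lambda t}\nu(dt)$. For $n\ge0$, $f^{(n)}(0+):=\lim_{\lambda\to0+}f^{(n)}(\lambda)\in[-\infty,\infty]$. If all $f^{(n)}(0+)$ are finite, $\omega_0=\omega_0^f:=\inf\{\lambda\in\mathbb{R}:\sum_{n\ge0}\frac{f^{(n)}(0+)}{n!}\lambda^n\text{ converges}\}$; otherwise $\omega_0:=0$. The extension $f_e:(\omega_0,\infty)\to\mathbb{R}$ is $f_e(\lambda)=\sum_{n\ge0}\frac{f^{(n)}(0+)}{n!}\lambda^n$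 for $\omega_0<\lambda\le0$ and $f_e(\lambda)=f(\lambda)$ for $\lambda>0$. *)

theory Defs
  imports "HOL-Analysis.Analysis" "HOL-Probability.Probability"
begin

definition CM :: "(real \<Rightarrow> real) \<Rightarrow> bool" where
  "CM f \<longleftrightarrow> (\<forall>n. \<forall>x>0. ((deriv ^^ n) f) differentiable (at x)) \<and>
              (\<forall>n. \<forall>x>0. (-1) ^ n * (deriv ^^ n) f x \<ge> 0)"

definition rep_measure :: "(real \<Rightarrow> real) \<Rightarrow> real measure \<Rightarrow> bool" where
  "rep_measure f \<mu> \<longleftrightarrow> sets \<mu> = sets borel \<and> emeasure \<mu> {..<0} = 0 \<and>
     (\<forall>s>0. integrable \<mu> (\<lambda>t. exp (- s * t)) \<and> f s = (\<integral>t. exp (- s * t) \<partial>\<mu>))"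

definition has_density_on_pos :: "real measure \<Rightarrow> (real \<Rightarrow> real) \<Rightarrow> bool" where
  "has_density_on_pos \<mu> d \<longleftrightarrow> d \<in> borel_measurable borel \<and> (\<forall>t>0. d t \<ge> 0) \<and>
     \<mu> = density lborel (\<lambda>t. ennreal (indicator {0<..} t * d t))"

definition deriv0 :: "(real \<Rightarrow> real) \<Rightarrow> nat \<Rightarrow> real" where
  "deriv0 f n = Lim (at_right 0) ((deriv ^^ n) f)"

definition all_deriv0_finite :: "(real \<Rightarrow> real) \<Rightarrow> bool" where
  "all_deriv0_finite f \<longleftrightarrow> (\<forall>n. \<exists>L. ((deriv ^^ n) f \<longlongrightarrow> L) (at_right 0))"

definition omega0 :: "(real \<Rightarrow> real) \<Rightarrow> ereal" where
  "omega0 f = (if all_deriv0_finite f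
     then Inf (ereal ` {x. summable (\<lambda>n. deriv0 f n / fact n * x ^ n)}) else 0)"

definition f_ext :: "(real \<Rightarrow> real) \<Rightarrow> real \<Rightarrow> real" where
  "f_ext f x = (if x \<le> 0 then (\<Sum>n. deriv0 f n / fact n * x ^ n) else f x)"

end

theory Submission
  imports Defs
begin

(* For a measure M on [0,\<infinity>) with Laplace transform L, the Post--Widder sums
   \<Sum>{(-\<lambda>)^n L^(n)(\<lambda>)/n! | p\<lambda> \<le> n < q\<lambda>} are the integrals of the Poisson probabilities
   P(p\<lambda> \<le> Poisson(\<lambda>t) < q\<lambda>), which tend to the indicator of (p,q) as \<lambda> \<rightarrow> \<infinity>; so the sums
   recover M(p,q). Hence a measure is determined by its Laplace transform, and the measure of g is
   e^(-\<omega>0 t) \<mu>. If the coefficients (-\<lambda>)^n g^(n)(\<lambda>)/n! decrease in n, the sums over the adjacent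
   windows [x\<lambda>, y\<lambda>) and [y\<lambda>, z\<lambda>) compare like the window lengths, which in the limit gives
   (y - x) \<mu>g(y,z] \<le> (z - y) \<mu>g(x,y]: the distribution function of \<mu>g is concave on (0,\<infinity>), so \<mu>g has
   a non-increasing density, and e^(\<omega>0 t) times it is a density of \<mu>. *)

section \<open>Poisson weights\<close>

lemma exp_partial_sum_le:
  fixes x :: real
  assumes "0 \<le> x" "finite I"
  shows "(\<Sum>n\<in>I. x ^ n / fact n) \<le> exp x"
proof -
  have exp: "(\<lambda>n. x ^ n / fact n) sums exp x"
    using exp_converges[of x] by (simp add: divide_inverse mult.commute)
  have "(\<Sum>n\<in>I. x ^ n / fact n) \<le> (\<Sum>n. x ^ n / fact n)"
    by (rule sum_le_suminf) (use exp assms in \<open>auto simp: sums_iff\<close>)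
  then show ?thesis
    using exp by (simp add: sums_iff)
qed

lemma abs_exp_minus_one_le: "\<bar>exp (x::real) - 1\<bar> \<le> \<bar>x\<bar> * exp \<bar>x\<bar>"
proof (cases "x \<ge> 0")
  case True
  have "exp x * (1 - x) \<le> 1"
    using exp_ge_add_one_self[of "-x"] by (simp add: exp_minus field_simps)
  then show ?thesis using True by (simp add: algebra_simps)
next
  case False
  have "1 - exp x \<le> -x" using exp_ge_add_one_self[of x] by linarith
  moreover have "- x * 1 \<le> -x * exp (-x)" using False by (intro mult_left_mono) auto
  moreover have "\<bar>exp x - 1\<bar> = 1 - exp x" "\<bar>x\<bar> * exp \<bar>x\<bar> = -x * exp (-x)"
    using False by simp_all
  ultimately show ?thesis by linarith
qed

definition poisson :: "nat \<Rightarrow> real \<Rightarrow> real" where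
  "poisson n u = u ^ n / fact n * exp (- u)"

lemma poisson_nonneg: "0 \<le> u \<Longrightarrow> 0 \<le> poisson n u"
  by (simp add: poisson_def)

lemma poisson_Suc: "poisson (Suc n) u = u * poisson n u / real (Suc n)"
  by (simp add: poisson_def field_simps)

lemma sums_poisson: "(\<lambda>n. poisson n u) sums 1"
proof -
  have "(\<lambda>n. u ^ n / fact n) sums exp u"
    using exp_converges[of u] by (simp add: divide_inverse mult.commute)
  from sums_mult2[OF this, of "exp (- u)"] show ?thesis
    by (simp add: poisson_def exp_minus_inverse)
qed

lemma sums_poisson_mean: "(\<lambda>n. real n * poisson n u) sums u"
proof -
  have "(\<lambda>n. real (Suc n) * poisson (Suc n) u) = (\<lambda>n. u * poisson n u)"
    by (auto simp: poisson_Suc simp del: of_nat_Suc)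
  with sums_mult[OF sums_poisson, of u] have "(\<lambda>n. real (Suc n) * poisson (Suc n) u) sums u"
    by simp
  then show ?thesis by (subst (asm) sums_Suc_iff) simp
qed

lemma sums_poisson_factorial_moment: "(\<lambda>n. real n * (real n - 1) * poisson n u) sums u\<^sup>2"
proof -
  have "(\<lambda>n. real (Suc n) * (real (Suc n) - 1) * poisson (Suc n) u) = (\<lambda>n. u * (real n * poisson n u))"
    by (auto simp: poisson_Suc simp del: of_nat_Suc)
  with sums_mult[OF sums_poisson_mean, of u]
  have "(\<lambda>n. real (Suc n) * (real (Suc n) - 1) * poisson (Suc n) u) sums u\<^sup>2"
    by (simp add: power2_eq_square)
  then show ?thesis by (subst (asm) sums_Suc_iff) simp
qed

lemma sums_poisson_variance: "(\<lambda>n. (real n - u)\<^sup>2 * poisson n u) sums u"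
proof -
  have "(\<lambda>n. real n * (real n - 1) * poisson n u + real n * poisson n u
              - 2 * u * (real n * poisson n u) + u\<^sup>2 * poisson n u)
        sums (u\<^sup>2 + u - 2 * u * u + u\<^sup>2 * 1)"
    by (intro sums_add sums_diff sums_mult sums_poisson sums_poisson_mean
        sums_poisson_factorial_moment)
  then show ?thesis
    by (simp add: power2_eq_square algebra_simps)
qed

lemma suminf_poisson_le_chebyshev:
  assumes u: "0 \<le> u" and d: "0 < d" and far: "\<And>n. n \<in> S \<Longrightarrow> d \<le> \<bar>real n - u\<bar>"
  shows "(\<Sum>n. indicator S n * poisson n u) \<le> u / d\<^sup>2"
proof -
  have le: "indicator S n * poisson n u \<le> (real n - u)\<^sup>2 * poisson n u / d\<^sup>2" for n
  proof (cases "n \<in> S")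
    case True
    have "d\<^sup>2 \<le> (real n - u)\<^sup>2"
      using far[OF True] d by (metis abs_of_pos abs_le_square_iff less_imp_le power2_abs)
    then have "1 * poisson n u \<le> (real n - u)\<^sup>2 / d\<^sup>2 * poisson n u"
      using d by (intro mult_right_mono poisson_nonneg u) simp_all
    then show ?thesis using True by simp
  qed (simp add: poisson_nonneg u)
  have var: "(\<lambda>n. (real n - u)\<^sup>2 * poisson n u / d\<^sup>2) sums (u / d\<^sup>2)"
    by (rule sums_divide[OF sums_poisson_variance])
  have "summable (\<lambda>n. indicator S n * poisson n u)"
    by (rule summable_comparison_test'[where g="\<lambda>n. (real n - u)\<^sup>2 * poisson n u / d\<^sup>2"])
       (use var le poisson_nonneg[OF u] in \<open>auto simp: sums_iff\<close>)
  then have "(\<Sum>n. indicator S n * poisson n u) \<le> (\<Sum>n. (real n - u)\<^sup>2 * poisson n u / d\<^sup>2)"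
    by (rule suminf_le[OF le]) (use var in \<open>simp add: sums_iff\<close>)
  then show ?thesis
    using var by (simp add: sums_iff)
qed

lemma sum_poisson_eq_suminf:
  "finite I \<Longrightarrow> (\<Sum>n\<in>I. poisson n u) = (\<Sum>n. indicator I n * poisson n u)"
  by (subst suminf_finite[where N=I]) (auto simp: indicator_def)

lemma sum_poisson_le_chebyshev:
  assumes "0 \<le> u" "0 < d" "finite I" "\<And>n. n \<in> I \<Longrightarrow> d \<le> \<bar>real n - u\<bar>"
  shows "(\<Sum>n\<in>I. poisson n u) \<le> u / d\<^sup>2"
  using suminf_poisson_le_chebyshev[OF assms(1,2,4)] sum_poisson_eq_suminf[OF assms(3)] by simp

lemma one_minus_sum_poisson_le_chebyshev:
  assumes "0 \<le> u" "0 < d" "finite I" "\<And>n. n \<notin> I \<Longrightarrow> d \<le> \<bar>real n - u\<bar>"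
  shows "1 - (\<Sum>n\<in>I. poisson n u) \<le> u / d\<^sup>2"
proof -
  have "(\<lambda>n. poisson n u - indicator I n * poisson n u) sums (1 - (\<Sum>n\<in>I. poisson n u))"
    by (rule sums_diff[OF sums_poisson])
       (use sums_finite[OF assms(3), of "\<lambda>n. indicator I n * poisson n u"] in simp)
  moreover have "(\<lambda>n. poisson n u - indicator I n * poisson n u) = (\<lambda>n. indicator (- I) n * poisson n u)"
    by (auto simp: indicator_def)
  ultimately have "(\<Sum>n. indicator (- I) n * poisson n u) = 1 - (\<Sum>n\<in>I. poisson n u)"
    by (simp add: sums_iff)
  with suminf_poisson_le_chebyshev[OF assms(1,2), of "- I"] assms(4) show ?thesis
    by simp
qed

lemma sum_poisson_le_1:
  assumes "0 \<le> u" "finite I"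
  shows "(\<Sum>n\<in>I. poisson n u) \<le> 1"
proof -
  have "(\<Sum>n\<in>I. poisson n u) = (\<Sum>n\<in>I. u ^ n / fact n) * exp (- u)"
    by (simp add: poisson_def sum_distrib_right)
  also have "\<dots> \<le> exp u * exp (- u)"
    by (intro mult_right_mono exp_partial_sum_le assms) simp
  finally show ?thesis by (simp add: exp_minus_inverse)
qed

lemma sum_poisson_le_chernoff:
  assumes u: "0 \<le> u" and "finite I" and below: "\<And>n. n \<in> I \<Longrightarrow> real n \<le> b"
  shows "(\<Sum>n\<in>I. poisson n u) \<le> exp (b - u / 2)"
proof -
  have "poisson n u \<le> exp b * ((u / exp 1) ^ n / fact n) * exp (- u)" if "n \<in> I" for n
  proof -
    have "exp 1 ^ n \<le> exp b"
      using below[OF that] by (simp add: exp_of_nat_mult[symmetric])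
    then have "u ^ n / fact n * exp (- u) * 1 \<le> u ^ n / fact n * exp (- u) * (exp b / exp 1 ^ n)"
      by (intro mult_left_mono) (use u in auto)
    then show ?thesis by (simp add: poisson_def power_divide field_simps)
  qed
  then have "(\<Sum>n\<in>I. poisson n u) \<le> exp b * exp (- u) * (\<Sum>n\<in>I. (u / exp 1) ^ n / fact n)"
    by (subst sum_distrib_left) (auto intro!: sum_mono simp: ac_simps)
  also have "\<dots> \<le> exp b * exp (- u) * exp (u / exp 1)"
    by (intro mult_left_mono exp_partial_sum_le assms) (use u in auto)
  also have "\<dots> \<le> exp b * exp (- u) * exp (u / 2)"
  proof -
    have "u / exp 1 \<le> u / 2"
      using exp_ge_add_one_self[of 1] u by (intro divide_left_mono) auto
    then show ?thesis by (intro mult_left_mono) auto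
  qed
  also have "\<dots> = exp (b - u / 2)"
    by (simp add: mult_exp_exp)
  finally show ?thesis .
qed

section \<open>Poisson windows\<close>

definition window :: "real \<Rightarrow> real \<Rightarrow> real \<Rightarrow> nat set" where
  "window p q l = {nat \<lceil>p * l\<rceil> ..< nat \<lceil>q * l\<rceil>}"

(* The probability that a Poisson variable of mean l t lies in [p l, q l); as l \<rightarrow> \<infinity> it tends
   to the indicator of (p, q) at t. *)
definition window_weight :: "real \<Rightarrow> real \<Rightarrow> real \<Rightarrow> real \<Rightarrow> real" where
  "window_weight p q l t = (\<Sum>n\<in>window p q l. poisson n (l * t))"

lemma finite_window [simp]: "finite (window p q l)"
  by (simp add: window_def)

lemma window_lower: "n \<in> window p q l \<Longrightarrow> p * l \<le> real n"
  unfolding window_def by (auto simp: le_nat_iff ceiling_le_iff)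

lemma window_upper: "n \<in> window p q l \<Longrightarrow> real n < q * l"
  unfolding window_def by (auto simp: zless_nat_eq_int_zless less_ceiling_iff)

lemma not_in_window: "n \<notin> window p q l \<Longrightarrow> real n < p * l \<or> q * l \<le> real n"
  unfolding window_def by (auto simp: not_le zless_nat_eq_int_zless less_ceiling_iff le_nat_iff ceiling_le_iff)

lemma window_weight_nonneg: "0 \<le> l \<Longrightarrow> 0 \<le> t \<Longrightarrow> 0 \<le> window_weight p q l t"
  unfolding window_weight_def by (intro sum_nonneg poisson_nonneg) simp

lemma window_weight_le_1: "0 \<le> l \<Longrightarrow> 0 \<le> t \<Longrightarrow> window_weight p q l t \<le> 1"
  unfolding window_weight_def by (intro sum_poisson_le_1) auto

lemma borel_measurable_window_weight [measurable]: "window_weight p q l \<in> borel_measurable borel"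
  unfolding window_weight_def poisson_def by measurable

lemma window_weight_tendsto_1:
  assumes "0 \<le> p" "p < t" "t < q"
  shows "(\<lambda>j. window_weight p q (real j) t) \<longlonglongrightarrow> 1"
proof (rule tendsto_sandwich)
  define d where "d = min (t - p) (q - t)"
  have d: "d > 0" "d \<le> t - p" "d \<le> q - t" using assms by (auto simp: d_def)
  have t: "0 \<le> t" using assms by simp
  show "(\<lambda>j. 1 - (t / d\<^sup>2) / real j) \<longlonglongrightarrow> 1"
    using tendsto_diff[OF tendsto_const lim_const_over_n[of "t / d\<^sup>2"]] by simp
  show "\<forall>\<^sub>F j in sequentially. window_weight p q (real j) t \<le> 1"
    using window_weight_le_1 t by auto
  show "\<forall>\<^sub>F j in sequentially. 1 - (t / d\<^sup>2) / real j \<le> window_weight p q (real j) t"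
  proof (rule eventually_sequentiallyI[of 1])
    fix j :: nat assume j: "1 \<le> j"
    have "1 - window_weight p q (real j) t \<le> (real j * t) / (real j * d)\<^sup>2"
      unfolding window_weight_def
    proof (rule one_minus_sum_poisson_le_chebyshev)
      fix n assume "n \<notin> window p q (real j)"
      then have "real n < p * real j \<or> q * real j \<le> real n" by (rule not_in_window)
      moreover have "real j * d \<le> real j * (t - p)" "real j * d \<le> real j * (q - t)"
        using d by (simp_all add: mult_left_mono)
      ultimately show "real j * d \<le> \<bar>real n - real j * t\<bar>"
        by (auto simp: algebra_simps)
    qed (use t d j in auto)
    also have "\<dots> = (t / d\<^sup>2) / real j"
      using j d by (simp add: power2_eq_square field_simps)
    finally show "1 - (t / d\<^sup>2) / real j \<le> window_weight p q (real j) t" by linarith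
  qed
qed simp

lemma window_weight_tendsto_0:
  assumes "0 \<le> t" "t < p \<or> q < t"
  shows "(\<lambda>j. window_weight p q (real j) t) \<longlonglongrightarrow> 0"
proof (rule tendsto_sandwich)
  define d where "d = (if t < p then p - t else t - q)"
  have d: "d > 0" using assms by (auto simp: d_def)
  show "\<forall>\<^sub>F j in sequentially. 0 \<le> window_weight p q (real j) t"
    using window_weight_nonneg assms by auto
  show "(\<lambda>j. (t / d\<^sup>2) / real j) \<longlonglongrightarrow> 0"
    by (rule lim_const_over_n)
  show "\<forall>\<^sub>F j in sequentially. window_weight p q (real j) t \<le> (t / d\<^sup>2) / real j"
  proof (rule eventually_sequentiallyI[of 1])
    fix j :: nat assume j: "1 \<le> j"
    have "window_weight p q (real j) t \<le> (real j * t) / (real j * d)\<^sup>2"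
      unfolding window_weight_def
    proof (rule sum_poisson_le_chebyshev)
      fix n assume "n \<in> window p q (real j)"
      then have "p * real j \<le> real n" "real n < q * real j"
        by (rule window_lower, rule window_upper)
      moreover have "real j * d = real j * (p - t) \<or> real j * d = real j * (t - q)"
        by (simp add: d_def)
      ultimately show "real j * d \<le> \<bar>real n - real j * t\<bar>"
        using assms(2) by (auto simp: d_def algebra_simps split: if_splits)
    qed (use assms d j in auto)
    also have "\<dots> = (t / d\<^sup>2) / real j"
      using j d by (simp add: power2_eq_square field_simps)
    finally show "window_weight p q (real j) t \<le> (t / d\<^sup>2) / real j" .
  qed
qed simp

lemma window_weight_le_exp:
  assumes "0 < C" "0 \<le> q" "4 * C \<le> l" "0 \<le> t"
  shows "window_weight p q l t \<le> exp (4 * q * C) * exp (- C * t)"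
proof (cases "t \<ge> 4 * q")
  case True
  have l: "0 \<le> l" using assms by simp
  have "window_weight p q l t \<le> exp (q * l - (l * t) / 2)"
    unfolding window_weight_def
    by (rule sum_poisson_le_chernoff) (use assms window_upper l in \<open>auto intro: less_imp_le\<close>)
  also have "\<dots> \<le> exp (- C * t)"
  proof -
    have "q * l \<le> l * t / 4" using True l by (simp add: field_simps mult_left_mono)
    moreover have "4 * C * t \<le> l * t" by (rule mult_right_mono) (use assms in auto)
    ultimately show ?thesis by simp
  qed
  also have "\<dots> \<le> exp (4 * q * C) * exp (- C * t)"
    using assms by simp
  finally show ?thesis .
next
  case False
  have "window_weight p q l t \<le> 1" using window_weight_le_1 assms by simp
  also have "1 \<le> exp (4 * q * C - C * t)"
    using False assms by (simp add: mult_right_mono)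
  finally show ?thesis by (simp add: exp_diff exp_minus field_simps)
qed

lemma tendsto_card_window:
  assumes "0 \<le> p" "p \<le> q"
  shows "(\<lambda>j. real (card (window p q (real j))) / real j) \<longlonglongrightarrow> q - p"
proof (rule tendsto_sandwich)
  have card: "real (card (window p q (real j))) = of_int \<lceil>q * real j\<rceil> - of_int \<lceil>p * real j\<rceil>" for j
  proof -
    have pq: "0 \<le> p * real j" "p * real j \<le> q * real j"
      using assms by (auto intro: mult_right_mono)
    then have "nat \<lceil>p * real j\<rceil> \<le> nat \<lceil>q * real j\<rceil>"
      by (intro nat_mono ceiling_mono)
    moreover have "real (nat \<lceil>x\<rceil>) = of_int \<lceil>x\<rceil>" if "0 \<le> x" for x :: real
      using that by (intro of_nat_nat) simp
    ultimately show ?thesis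
      using pq by (simp add: window_def of_nat_diff)
  qed
  have bound: "\<bar>real (card (window p q (real j))) - (q - p) * real j\<bar> \<le> 1" for j
    unfolding card left_diff_distrib
    using ceiling_correct[of "q * real j"] ceiling_correct[of "p * real j"] by linarith
  have close: "\<bar>real (card (window p q (real j))) / real j - (q - p)\<bar> \<le> 1 / real j"
    if "1 \<le> j" for j
  proof -
    have "\<bar>real (card (window p q (real j))) / real j - (q - p)\<bar>
        = \<bar>real (card (window p q (real j))) - (q - p) * real j\<bar> / real j"
      using that by (simp add: field_simps)
    with bound[of j] show ?thesis
      by (simp add: divide_right_mono)
  qed
  then have "(q - p) - 1 / real j \<le> real (card (window p q (real j))) / real j"
    "real (card (window p q (real j))) / real j \<le> (q - p) + 1 / real j" if "1 \<le> j" for j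
    using that unfolding abs_le_iff by fastforce+
  then show "\<forall>\<^sub>F j in sequentially. (q - p) - 1 / real j \<le> real (card (window p q (real j))) / real j"
    "\<forall>\<^sub>F j in sequentially. real (card (window p q (real j))) / real j \<le> (q - p) + 1 / real j"
    by (auto intro: eventually_sequentiallyI[of 1])
  show "(\<lambda>j. (q - p) - 1 / real j) \<longlonglongrightarrow> q - p" "(\<lambda>j. (q - p) + 1 / real j) \<longlonglongrightarrow> q - p"
    using tendsto_diff[OF tendsto_const lim_const_over_n[of 1]]
      tendsto_add[OF tendsto_const lim_const_over_n[of 1]] by simp_all
qed

lemma window_weight_tendsto_indicator:
  assumes "0 \<le> p" "0 \<le> t" "t \<noteq> p" "t \<noteq> q"
  shows "(\<lambda>j. window_weight p q (real j) t) \<longlonglongrightarrow> indicator {p<..<q} t"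
  using window_weight_tendsto_1[of p t q] window_weight_tendsto_0[of t p q] assms
  by (cases "t \<in> {p<..<q}") (auto simp: not_less less_le)

section \<open>Laplace transforms of measures on [0, \<infinity>)\<close>

lemma higher_deriv_cong_open:
  assumes "open S" "\<And>x. x \<in> S \<Longrightarrow> f x = g x" "x \<in> S"
  shows "(deriv ^^ n) f x = (deriv ^^ n) g x"
  using assms(3)
proof (induction n arbitrary: x)
  case (Suc n)
  have "eventually (\<lambda>y. y \<in> S) (nhds x)"
    using assms(1) Suc.prems by (rule eventually_nhds_in_open)
  then have "eventually (\<lambda>y. (deriv ^^ n) f y = (deriv ^^ n) g y) (nhds x)"
    by eventually_elim (rule Suc.IH)
  then show ?case by (simp add: deriv_cong_ev)
qed (use assms in simp)

lemma abs_diff_quotient_exp_le: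
  fixes s y t d :: real
  assumes "0 \<le> t" "\<bar>y - s\<bar> < d" "y \<noteq> s"
  shows "\<bar>(exp (- y * t) - exp (- s * t)) / (y - s)\<bar> \<le> t * exp (- (s - d) * t)"
proof -
  have "exp (- y * t) - exp (- s * t) = exp (- s * t) * (exp (- (y - s) * t) - 1)"
    by (simp add: algebra_simps flip: exp_add)
  then have "\<bar>exp (- y * t) - exp (- s * t)\<bar> = exp (- s * t) * \<bar>exp (- (y - s) * t) - 1\<bar>"
    by (simp add: abs_mult)
  also have "\<dots> \<le> exp (- s * t) * (\<bar>- (y - s) * t\<bar> * exp \<bar>- (y - s) * t\<bar>)"
    by (intro mult_left_mono abs_exp_minus_one_le) simp
  also have "\<dots> \<le> exp (- s * t) * (\<bar>y - s\<bar> * t * exp (d * t))"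
    using assms by (intro mult_left_mono mult_mono) (auto simp: abs_mult intro!: mult_right_mono)
  finally show ?thesis
    using assms(3) by (simp add: abs_divide field_simps mult_exp_exp)
qed

definition laplace :: "real measure \<Rightarrow> real \<Rightarrow> real" where
  "laplace M s = (\<integral>t. exp (- s * t) \<partial>M)"

definition widder_coeff :: "real measure \<Rightarrow> nat \<Rightarrow> real \<Rightarrow> real" where
  "widder_coeff M n s = (- s) ^ n * (deriv ^^ n) (laplace M) s / fact n"

locale laplace_measure =
  fixes M :: "real measure" and c :: real
  assumes sets_M: "sets M = sets borel"
    and emeasure_negative: "emeasure M {..<0} = 0"
    and abscissa_nonneg: "0 \<le> c"
    and integrable_exp: "c < s \<Longrightarrow> integrable M (\<lambda>t. exp (- s * t))"
begin

lemma borel_measurable_M [simp]: "borel_measurable M = borel_measurable borel"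
  using measurable_cong_sets[OF sets_M refl] by blast

lemma AE_nonneg: "AE t in M. 0 \<le> t"
proof (rule AE_I')
  show "{..<0} \<in> null_sets M" using emeasure_negative by (auto simp: null_sets_def sets_M)
qed (auto simp: not_le)

lemma laplace_measure_mono: "c \<le> c' \<Longrightarrow> laplace_measure M c'"
  using sets_M emeasure_negative abscissa_nonneg integrable_exp
  by unfold_locales auto

lemma integrable_power_exp:
  assumes "c < s"
  shows "integrable M (\<lambda>t. t ^ k * exp (- s * t))"
proof (rule Bochner_Integration.integrable_bound)
  define e where "e = (s - c) / 2"
  have e: "0 < e" "c < s - e" using assms by (auto simp: e_def field_simps)
  show "integrable M (\<lambda>t. (fact k / e ^ k) * exp (- (s - e) * t))"
    using integrable_exp[OF e(2)] by simp
  show "(\<lambda>t. t ^ k * exp (- s * t)) \<in> borel_measurable M" by simp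
  show "AE t in M. norm (t ^ k * exp (- s * t)) \<le> norm (fact k / e ^ k * exp (- (s - e) * t))"
    using AE_nonneg
  proof eventually_elim
    case (elim t)
    have "(e * t) ^ k / fact k \<le> exp (e * t)"
      using exp_partial_sum_le[of "e * t" "{k}"] elim e by simp
    then have "t ^ k \<le> fact k / e ^ k * exp (e * t)"
      using e by (simp add: field_simps power_mult_distrib)
    then have "t ^ k * exp (- s * t) \<le> fact k / e ^ k * exp (e * t) * exp (- s * t)"
      by (rule mult_right_mono) simp
    also have "\<dots> = fact k / e ^ k * exp (- (s - e) * t)"
      by (simp add: mult.assoc mult_exp_exp algebra_simps)
    finally show ?case
      using elim e by simp
  qed
qed

lemma integrable_minus_power_exp:
  assumes "c < s"
  shows "integrable M (\<lambda>t. (- t) ^ k * exp (- s * t))"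
proof -
  have "integrable M (\<lambda>t. (- 1) ^ k * (t ^ k * exp (- s * t)))"
    by (intro integrable_mult_right integrable_power_exp assms)
  moreover have "(- t) ^ k * exp (- s * t) = (- 1) ^ k * (t ^ k * exp (- s * t))" for t :: real
    by (subst power_minus) (simp only: mult.assoc)
  ultimately show ?thesis
    by (simp only:)
qed

lemma tendsto_moment_difference_quotient:
  assumes d: "0 < d" "c < s - d" and Y: "Y \<longlonglongrightarrow> s" "\<And>i. \<bar>Y i - s\<bar> < d" "\<And>i. Y i \<noteq> s"
  shows "(\<lambda>i. \<integral>t. (- t) ^ k * ((exp (- Y i * t) - exp (- s * t)) / (Y i - s)) \<partial>M)
           \<longlonglongrightarrow> (\<integral>t. (- t) ^ Suc k * exp (- s * t) \<partial>M)"
proof (rule integral_dominated_convergence[where w="\<lambda>t. t ^ Suc k * exp (- (s - d) * t)"])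
  show "integrable M (\<lambda>t. t ^ Suc k * exp (- (s - d) * t))"
    by (rule integrable_power_exp[OF d(2)])
  show "AE t in M. (\<lambda>i. (- t) ^ k * ((exp (- Y i * t) - exp (- s * t)) / (Y i - s)))
      \<longlonglongrightarrow> (- t) ^ Suc k * exp (- s * t)"
  proof (rule AE_I2)
    fix t
    have "((\<lambda>y. (exp (- y * t) - exp (- s * t)) / (y - s)) \<longlongrightarrow> - t * exp (- s * t)) (at s)"
      using DERIV_fun_exp[OF DERIV_cmult_right[OF DERIV_ident, of "- t"]]
      by (simp add: has_field_derivative_iff mult.commute)
    then have "(\<lambda>i. (exp (- Y i * t) - exp (- s * t)) / (Y i - s)) \<longlonglongrightarrow> - t * exp (- s * t)"
      unfolding tendsto_at_iff_sequentially using Y(1,3) by (auto simp: o_def)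
    then have "(\<lambda>i. (- t) ^ k * ((exp (- Y i * t) - exp (- s * t)) / (Y i - s)))
        \<longlonglongrightarrow> (- t) ^ k * (- t * exp (- s * t))"
      by (intro tendsto_mult tendsto_const)
    then show "(\<lambda>i. (- t) ^ k * ((exp (- Y i * t) - exp (- s * t)) / (Y i - s)))
        \<longlonglongrightarrow> (- t) ^ Suc k * exp (- s * t)"
      by (simp add: ac_simps)
  qed
  show "AE t in M. norm ((- t) ^ k * ((exp (- Y i * t) - exp (- s * t)) / (Y i - s)))
      \<le> t ^ Suc k * exp (- (s - d) * t)" for i
    using AE_nonneg
  proof eventually_elim
    case (elim t)
    have "norm ((- t) ^ k * ((exp (- Y i * t) - exp (- s * t)) / (Y i - s)))
        = t ^ k * \<bar>(exp (- Y i * t) - exp (- s * t)) / (Y i - s)\<bar>"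
      using elim by (simp add: abs_mult power_abs)
    also have "\<dots> \<le> t ^ k * (t * exp (- (s - d) * t))"
      using elim Y by (intro mult_left_mono abs_diff_quotient_exp_le) auto
    finally show ?case by (simp add: ac_simps)
  qed
qed simp_all

lemma has_real_derivative_moment:
  assumes "c < s"
  shows "((\<lambda>s. \<integral>t. (- t) ^ k * exp (- s * t) \<partial>M)
           has_real_derivative (\<integral>t. (- t) ^ Suc k * exp (- s * t) \<partial>M)) (at s)"
proof -
  define L where "L y = (\<integral>t. (- t) ^ k * exp (- y * t) \<partial>M)" for y
  have quotient: "(L y - L s) / (y - s) = (\<integral>t. (- t) ^ k * ((exp (- y * t) - exp (- s * t)) / (y - s)) \<partial>M)"
    if "c < y" for y
  proof -
    have "L y - L s = (\<integral>t. (- t) ^ k * exp (- y * t) - (- t) ^ k * exp (- s * t) \<partial>M)"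
      unfolding L_def using integrable_minus_power_exp[OF that] integrable_minus_power_exp[OF assms] by simp
    then show ?thesis
      by (simp add: integral_divide_zero[symmetric] right_diff_distrib diff_divide_distrib)
  qed
  define d where "d = (s - c) / 2"
  have d: "0 < d" "c < s - d"
    using assms by (auto simp: d_def field_simps)
  have "(L has_real_derivative (\<integral>t. (- t) ^ Suc k * exp (- s * t) \<partial>M)) (at s)"
    unfolding has_field_derivative_iff tendsto_at_iff_sequentially
  proof (intro allI impI)
    fix X :: "nat \<Rightarrow> real" assume X: "\<forall>i. X i \<in> UNIV - {s}" "X \<longlonglongrightarrow> s"
    from X(2) d obtain N where N: "\<And>i. N \<le> i \<Longrightarrow> \<bar>X i - s\<bar> < d"
      unfolding LIMSEQ_def dist_real_def by blast
    define Y where "Y i = X (i + N)" for i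
    have Y_lim: "Y \<longlonglongrightarrow> s"
      unfolding Y_def by (rule LIMSEQ_ignore_initial_segment[OF X(2)])
    have Y: "\<bar>Y i - s\<bar> < d" "Y i \<noteq> s" "c < Y i" for i
      using N[of "i + N"] X(1) d by (auto simp: Y_def abs_less_iff)
    have "(\<lambda>i. (L (Y i) - L s) / (Y i - s)) \<longlonglongrightarrow> (\<integral>t. (- t) ^ Suc k * exp (- s * t) \<partial>M)"
      unfolding quotient[OF Y(3)] using d Y_lim Y(1,2) by (rule tendsto_moment_difference_quotient)
    then have "(\<lambda>i. ((\<lambda>y. (L y - L s) / (y - s)) \<circ> X) (i + N))
        \<longlonglongrightarrow> (\<integral>t. (- t) ^ Suc k * exp (- s * t) \<partial>M)"
      by (simp add: Y_def o_def)
    then show "((\<lambda>y. (L y - L s) / (y - s)) \<circ> X) \<longlonglongrightarrow> (\<integral>t. (- t) ^ Suc k * exp (- s * t) \<partial>M)"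
      by (rule LIMSEQ_offset)
  qed
  then show ?thesis
    unfolding L_def .
qed

lemma higher_deriv_laplace:
  "c < s \<Longrightarrow> (deriv ^^ n) (laplace M) s = (\<integral>t. (- t) ^ n * exp (- s * t) \<partial>M)"
proof (induction n arbitrary: s)
  case 0
  then show ?case by (simp add: laplace_def)
next
  case (Suc n)
  have "eventually (\<lambda>y. y \<in> {c<..}) (nhds s)"
    using Suc.prems by (intro eventually_nhds_in_open) auto
  then have "eventually (\<lambda>y. (deriv ^^ n) (laplace M) y = (\<integral>t. (- t) ^ n * exp (- y * t) \<partial>M)) (nhds s)"
    by eventually_elim (use Suc.IH in auto)
  then have "deriv ((deriv ^^ n) (laplace M)) s = deriv (\<lambda>y. \<integral>t. (- t) ^ n * exp (- y * t) \<partial>M) s"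
    by (rule deriv_cong_ev) simp
  also have "\<dots> = (\<integral>t. (- t) ^ Suc n * exp (- s * t) \<partial>M)"
    by (rule DERIV_imp_deriv[OF has_real_derivative_moment[OF Suc.prems]])
  finally show ?case by simp
qed

lemma space_M [simp]: "space M = UNIV"
  using sets_eq_imp_space_eq[OF sets_M] by simp

lemma emeasure_atMost_finite: "emeasure M {..b} \<noteq> \<infinity>"
proof -
  have "integrable M (indicator {..b} :: real \<Rightarrow> real)"
  proof (rule Bochner_Integration.integrable_bound)
    show "integrable M (\<lambda>t. exp ((c + 1) * b) * exp (- (c + 1) * t))"
      using integrable_exp[of "c + 1"] by simp
    show "AE t in M. norm (indicator {..b} t :: real) \<le> norm (exp ((c + 1) * b) * exp (- (c + 1) * t))"
    proof (intro AE_I2)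
      fix t :: real
      have "t \<le> b \<Longrightarrow> (c + 1) * t \<le> (c + 1) * b"
        using abscissa_nonneg by (intro mult_left_mono) auto
      moreover have "exp ((c + 1) * b) * exp (- (c + 1) * t) = exp ((c + 1) * b - (c + 1) * t)"
        by (simp add: mult_exp_exp algebra_simps)
      ultimately show "norm (indicator {..b} t :: real) \<le> norm (exp ((c + 1) * b) * exp (- (c + 1) * t))"
        by (auto simp: indicator_def)
    qed
  qed simp
  then show ?thesis by (simp add: integrable_indicator_iff less_top)
qed

lemma emeasure_bounded_above_finite: "A \<subseteq> {..b} \<Longrightarrow> emeasure M A \<noteq> \<infinity>"
  using emeasure_atMost_finite[of b] emeasure_mono[of A "{..b}" M] by (auto simp: sets_M top_unique)

lemma tendsto_integral_dominated_eventually: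
  fixes F :: "nat \<Rightarrow> real \<Rightarrow> real"
  assumes [measurable]: "\<And>j. F j \<in> borel_measurable borel" "f \<in> borel_measurable borel"
    and "AE t in M. (\<lambda>j. F j t) \<longlonglongrightarrow> f t"
    and "integrable M w"
    and bound: "\<And>j. K \<le> real j \<Longrightarrow> AE t in M. norm (F j t) \<le> w t"
  shows "(\<lambda>j. \<integral>t. F j t \<partial>M) \<longlonglongrightarrow> (\<integral>t. f t \<partial>M)"
proof -
  define N where "N = nat \<lceil>K\<rceil>"
  have "(\<lambda>j. \<integral>t. F (j + N) t \<partial>M) \<longlonglongrightarrow> (\<integral>t. f t \<partial>M)"
  proof (rule integral_dominated_convergence[OF _ _ assms(4)])
    show "AE t in M. (\<lambda>j. F (j + N) t) \<longlonglongrightarrow> f t"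
      using assms(3) by eventually_elim (rule LIMSEQ_ignore_initial_segment)
    show "AE t in M. norm (F (j + N) t) \<le> w t" for j
      by (rule bound) (simp add: N_def; linarith)
  qed simp_all
  then show ?thesis by (rule LIMSEQ_offset)
qed

lemma window_weight_dominated:
  assumes "0 \<le> q" "4 * (c + 1) \<le> l" "\<And>t. \<bar>h t\<bar> \<le> 1"
  shows "AE t in M. norm (window_weight p q l t * h t) \<le> exp (4 * q * (c + 1)) * exp (- (c + 1) * t)"
  using AE_nonneg
proof eventually_elim
  case (elim t)
  have "\<bar>window_weight p q l t\<bar> * \<bar>h t\<bar> \<le> window_weight p q l t"
    using window_weight_nonneg[of l t p q] assms elim abscissa_nonneg
    by (auto intro: mult_left_le)
  also have "\<dots> \<le> exp (4 * q * (c + 1)) * exp (- (c + 1) * t)"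
    by (rule window_weight_le_exp) (use assms elim abscissa_nonneg in auto)
  finally show ?case by (simp add: abs_mult)
qed

lemma integrable_window_majorant: "integrable M (\<lambda>t. exp (4 * q * (c + 1)) * exp (- (c + 1) * t))"
  using integrable_exp[of "c + 1"] by simp

lemma integrable_window_weight_mult:
  assumes "0 \<le> q" "4 * (c + 1) \<le> l" "\<And>t. \<bar>h t\<bar> \<le> 1" "h \<in> borel_measurable borel"
  shows "integrable M (\<lambda>t. window_weight p q l t * h t)"
  by (rule Bochner_Integration.integrable_bound[OF integrable_window_majorant])
     (use assms window_weight_dominated[OF assms(1-3)] in auto)

lemma tendsto_integral_window_weight_mult:
  assumes "0 \<le> q" "\<And>t. \<bar>h t\<bar> \<le> 1"
    and [measurable]: "h \<in> borel_measurable borel" "L \<in> borel_measurable borel"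
    and "AE t in M. (\<lambda>j. window_weight p q (real j) t * h t) \<longlonglongrightarrow> L t"
  shows "(\<lambda>j. \<integral>t. window_weight p q (real j) t * h t \<partial>M) \<longlonglongrightarrow> (\<integral>t. L t \<partial>M)"
  by (rule tendsto_integral_dominated_eventually[OF _ _ assms(5) integrable_window_majorant])
     (use window_weight_dominated[OF assms(1) _ assms(2)] in auto)

lemma tendsto_integral_window_weight:
  assumes "0 \<le> p" "p \<le> q" "emeasure M {p} = 0" "emeasure M {q} = 0"
  shows "(\<lambda>j. \<integral>t. window_weight p q (real j) t \<partial>M) \<longlonglongrightarrow> measure M {p<..<q}"
proof -
  have "{p} \<union> {q} \<in> null_sets M"
    using assms(3,4) by (intro null_sets.Un) (auto simp: null_sets_def sets_M)
  then have "AE t in M. t \<noteq> p \<and> t \<noteq> q"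
    by (rule AE_I') auto
  with AE_nonneg have "AE t in M. (\<lambda>j. window_weight p q (real j) t * 1) \<longlonglongrightarrow> indicator {p<..<q} t"
    by eventually_elim (simp add: window_weight_tendsto_indicator assms(1))
  from tendsto_integral_window_weight_mult[OF _ _ _ _ this] assms show ?thesis
    by simp
qed

lemma tendsto_integral_window_weight_inside:
  assumes "0 \<le> p" "p \<le> q"
  shows "(\<lambda>j. \<integral>t. window_weight p q (real j) t * indicator {p<..<q} t \<partial>M) \<longlonglongrightarrow> measure M {p<..<q}"
proof -
  have "(\<lambda>j. window_weight p q (real j) t * indicator {p<..<q} t) \<longlonglongrightarrow> indicator {p<..<q} t" for t
    using window_weight_tendsto_indicator[of p t q] assms
    by (cases "t \<in> {p<..<q}") auto
  from tendsto_integral_window_weight_mult[OF _ _ _ _ AE_I2[OF this]] assms show ?thesis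
    by (simp add: indicator_abs_le_1)
qed

lemma tendsto_integral_window_weight_outside:
  assumes "0 \<le> p" "p \<le> q"
  shows "(\<lambda>j. \<integral>t. window_weight p q (real j) t * indicator (- {p..q}) t \<partial>M) \<longlonglongrightarrow> 0"
proof -
  have "AE t in M. (\<lambda>j. window_weight p q (real j) t * indicator (- {p..q}) t) \<longlonglongrightarrow> 0"
    using AE_nonneg
  proof eventually_elim
    case (elim t)
    then show ?case
      using window_weight_tendsto_0[of t p q] by (cases "t \<in> {p..q}") auto
  qed
  from tendsto_integral_window_weight_mult[OF _ _ _ _ this] assms show ?thesis
    by (simp add: indicator_abs_le_1)
qed

lemma tendsto_laplace_at_top: "(\<lambda>j. laplace M (real j)) \<longlonglongrightarrow> measure M {0}"
proof -
  have "(\<lambda>j. \<integral>t. exp (- real j * t) \<partial>M) \<longlonglongrightarrow> (\<integral>t. indicator {0} t \<partial>M)"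
  proof (rule tendsto_integral_dominated_eventually[OF _ _ _ integrable_exp[of "c + 1"], where K="c + 1"])
    show "AE t in M. (\<lambda>j. exp (- real j * t)) \<longlonglongrightarrow> indicator {0} t"
      using AE_nonneg
    proof eventually_elim
      case (elim t)
      show ?case
      proof (cases "t = 0")
        case False
        then have "(\<lambda>j. exp (- t) ^ j) \<longlonglongrightarrow> 0"
          using elim by (intro LIMSEQ_power_zero) auto
        then show ?thesis
          using False by (simp add: exp_of_nat_mult[symmetric] mult.commute)
      qed simp
    qed
    show "AE t in M. norm (exp (- real j * t)) \<le> exp (- (c + 1) * t)" if "c + 1 \<le> real j" for j
      using AE_nonneg
    proof eventually_elim
      case (elim t)
      have "(c + 1) * t \<le> real j * t"
        using that elim by (rule mult_right_mono)
      then show ?case by (simp add: algebra_simps)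
    qed
  qed simp_all
  then show ?thesis by (simp add: laplace_def)
qed

lemma integral_window_weight:
  assumes "c < l"
  shows "(\<integral>t. window_weight p q l t \<partial>M) = (\<Sum>n\<in>window p q l. widder_coeff M n l)"
proof -
  have poisson: "poisson n (l * t) = (- l) ^ n / fact n * ((- t) ^ n * exp (- l * t))" for n t
  proof -
    have "(- l) ^ n * (- t) ^ n = (l * t) ^ n"
      by (simp add: power_mult_distrib[symmetric])
    then show ?thesis
      unfolding poisson_def by (simp add: field_simps)
  qed
  have "(\<integral>t. window_weight p q l t \<partial>M) = (\<Sum>n\<in>window p q l. \<integral>t. poisson n (l * t) \<partial>M)"
    unfolding window_weight_def poisson
    by (intro Bochner_Integration.integral_sum integrable_mult_right integrable_minus_power_exp assms)
  also have "\<dots> = (\<Sum>n\<in>window p q l. (- l) ^ n / fact n * (\<integral>t. (- t) ^ n * exp (- l * t) \<partial>M))"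
    unfolding poisson by simp
  finally show ?thesis
    by (simp add: widder_coeff_def higher_deriv_laplace[OF assms])
qed

lemma integral_window_weight_restrict_le:
  assumes "0 \<le> q" "4 * (c + 1) \<le> l" "A \<in> sets borel"
  shows "(\<integral>t. window_weight p q l t * indicator A t \<partial>M) \<le> (\<integral>t. window_weight p q l t \<partial>M)"
proof (rule integral_mono_AE)
  show "integrable M (\<lambda>t. window_weight p q l t * indicator A t)"
    "integrable M (window_weight p q l)"
    using integrable_window_weight_mult[OF assms(1,2), of "indicator A" p]
      integrable_window_weight_mult[OF assms(1,2), of "\<lambda>_. 1" p] assms(3)
    by (simp_all add: indicator_abs_le_1)
  show "AE t in M. window_weight p q l t * indicator A t \<le> window_weight p q l t"
    using AE_nonneg
    by eventually_elim (use window_weight_nonneg[of l] assms abscissa_nonneg in \<open>auto simp: indicator_def\<close>)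
qed

lemma integral_window_weight_le:
  assumes "0 \<le> q" "4 * (c + 1) \<le> l"
  shows "(\<integral>t. window_weight p q l t \<partial>M)
    \<le> measure M {p..q} + (\<integral>t. window_weight p q l t * indicator (- {p..q}) t \<partial>M)"
proof -
  have int_interval: "integrable M (\<lambda>t. indicator {p..q} t :: real)"
    using emeasure_bounded_above_finite[of "{p..q}" q] by (simp add: integrable_indicator_iff less_top sets_M)
  have int_outside: "integrable M (\<lambda>t. window_weight p q l t * indicator (- {p..q}) t)"
    by (rule integrable_window_weight_mult[OF assms]) (auto simp: indicator_abs_le_1)
  have "(\<integral>t. window_weight p q l t \<partial>M)
      \<le> (\<integral>t. indicator {p..q} t + window_weight p q l t * indicator (- {p..q}) t \<partial>M)"
  proof (rule integral_mono_AE)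
    show "integrable M (window_weight p q l)"
      using integrable_window_weight_mult[OF assms, of "\<lambda>_. 1" p] by simp
    show "AE t in M. window_weight p q l t \<le> indicator {p..q} t + window_weight p q l t * indicator (- {p..q}) t"
      using AE_nonneg
      by eventually_elim (use window_weight_le_1[of l] assms abscissa_nonneg in \<open>auto simp: indicator_def\<close>)
  qed (use int_interval int_outside in simp)
  also have "\<dots> = measure M {p..q} + (\<integral>t. window_weight p q l t * indicator (- {p..q}) t \<partial>M)"
    using int_interval int_outside by simp
  finally show ?thesis .
qed

lemma emeasure_eq_measure_bounded_above: "A \<subseteq> {..b} \<Longrightarrow> emeasure M A = ennreal (measure M A)"
  using emeasure_bounded_above_finite[of A b] by (simp add: emeasure_eq_ennreal_measure)

lemma fmeasurable_bounded_above: "A \<in> sets borel \<Longrightarrow> A \<subseteq> {..b} \<Longrightarrow> A \<in> fmeasurable M"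
  using emeasure_bounded_above_finite[of A b] by (simp add: fmeasurable_def sets_M less_top)

lemma measure_mono_bounded_above:
  "A \<subseteq> B \<Longrightarrow> A \<in> sets borel \<Longrightarrow> B \<in> sets borel \<Longrightarrow> B \<subseteq> {..b} \<Longrightarrow> measure M A \<le> measure M B"
  by (rule measure_mono_fmeasurable) (auto simp: sets_M intro: fmeasurable_bounded_above)

end

section \<open>Uniqueness of the Laplace transform\<close>

lemma measure_eqI_atMost:
  fixes M N :: "real measure"
  assumes sets: "sets M = sets borel" "sets N = sets borel"
    and fin: "\<And>b. emeasure M {..b} \<noteq> \<infinity>"
    and eq: "\<And>b. emeasure M {..b} = emeasure N {..b}"
  shows "M = N"
proof (rule measure_eqI_generator_eq[where E="range atMost" and \<Omega>=UNIV and A="\<lambda>i. {..real i}"])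
  show "Int_stable (range (atMost :: real \<Rightarrow> real set))"
    by (auto simp: Int_stable_def intro!: image_eqI[where x="min _ _"])
  have "sets borel = sigma_sets UNIV (range (atMost :: real \<Rightarrow> real set))"
    by (subst borel_eq_atMost) simp
  then show "sets M = sigma_sets UNIV (range atMost)" "sets N = sigma_sets UNIV (range atMost)"
    using sets by simp_all
  show "(\<Union>i. {..real i}) = UNIV"
    by (auto intro: real_arch_simple)
  show "emeasure M X = emeasure N X" if "X \<in> range atMost" for X
    using that eq by auto
  show "emeasure M {..real i} \<noteq> \<infinity>" for i
    by (rule fin)
qed auto

lemma Union_Ioc_inverse_Suc: "(\<Union>n. {a + inverse (real (Suc n))<..b}) = {a<..(b::real)}"
proof (intro equalityI subsetI)
  fix x assume "x \<in> {a<..b}"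
  then obtain n where "inverse (real (Suc n)) < x - a"
    using reals_Archimedean[of "x - a"] by auto
  with \<open>x \<in> {a<..b}\<close> have "x \<in> {a + inverse (real (Suc n))<..b}"
    by auto
  then show "x \<in> (\<Union>n. {a + inverse (real (Suc n))<..b})"
    by blast
next
  fix x assume "x \<in> (\<Union>n. {a + inverse (real (Suc n))<..b})"
  then obtain n where "a + inverse (real (Suc n)) < x" "x \<le> b"
    by auto
  moreover have "0 < inverse (real (Suc n))"
    by simp
  ultimately have "a < x"
    by linarith
  with \<open>x \<le> b\<close> show "x \<in> {a<..b}"
    by simp
qed

lemma Inter_Icc_inverse_Suc: "(\<Inter>n. {a..b + inverse (real (Suc n))}) = {a..(b::real)}"
proof (intro equalityI subsetI)
  fix x assume "x \<in> (\<Inter>n. {a..b + inverse (real (Suc n))})"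
  then have x: "a \<le> x" "x \<le> b + inverse (real (Suc n))" for n
    by auto
  have "x \<le> b"
  proof (rule ccontr)
    assume "\<not> x \<le> b"
    then obtain n where "inverse (real (Suc n)) < x - b"
      using reals_Archimedean[of "x - b"] by force
    with x(2)[of n] show False by linarith
  qed
  with x(1) show "x \<in> {a..b}"
    by simp
next
  fix x assume "x \<in> {a..b}"
  then have "x \<in> {a..b + inverse (real (Suc n))}" for n
    by (simp add: add_increasing2)
  then show "x \<in> (\<Inter>n. {a..b + inverse (real (Suc n))})"
    by blast
qed

lemma incseq_Ioc_inverse_Suc: "incseq (\<lambda>n. {a + inverse (real (Suc n))<..b::real})"
proof (intro incseq_SucI subsetI)
  fix n x assume "x \<in> {a + inverse (real (Suc n))<..b}"
  then have x: "a + inverse (real (Suc n)) < x" "x \<le> b"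
    by simp_all
  have "inverse (real (Suc (Suc n))) \<le> inverse (real (Suc n))"
    by (rule le_imp_inverse_le) auto
  with x have "a + inverse (real (Suc (Suc n))) < x"
    by linarith
  with x(2) show "x \<in> {a + inverse (real (Suc (Suc n)))<..b}"
    by simp
qed

lemma decseq_Icc_inverse_Suc: "decseq (\<lambda>n. {a..b + inverse (real (Suc n))::real})"
proof (intro decseq_SucI subsetI)
  fix n x assume "x \<in> {a..b + inverse (real (Suc (Suc n)))}"
  then have x: "a \<le> x" "x \<le> b + inverse (real (Suc (Suc n)))"
    by simp_all
  have "inverse (real (Suc (Suc n))) \<le> inverse (real (Suc n))"
    by (rule le_imp_inverse_le) auto
  with x have "x \<le> b + inverse (real (Suc n))"
    by linarith
  with x(1) show "x \<in> {a..b + inverse (real (Suc n))}"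
    by simp
qed

lemma SUP_emeasure_Ioc_inverse_Suc:
  fixes K :: "real measure"
  assumes "sets K = sets borel"
  shows "(SUP n. emeasure K {a + inverse (real (Suc n))<..b}) = emeasure K {a<..b}"
proof -
  have "range (\<lambda>n. {a + inverse (real (Suc n))<..b}) \<subseteq> sets K"
    using assms by (simp add: image_subset_iff)
  from SUP_emeasure_incseq[OF this incseq_Ioc_inverse_Suc] show ?thesis
    by (simp only: Union_Ioc_inverse_Suc)
qed

lemma emeasure_atMost_split:
  fixes K :: "real measure"
  assumes "sets K = sets borel" "0 \<le> b"
  shows "emeasure K {..b} = emeasure K {..<0} + emeasure K {0} + emeasure K {0<..b}"
proof -
  have "emeasure K {..<0} + emeasure K {0} = emeasure K ({..<0} \<union> {0})"
    by (rule plus_emeasure) (use assms(1) in auto)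
  moreover have "emeasure K ({..<0} \<union> {0}) + emeasure K {0<..b} = emeasure K ({..<0} \<union> {0} \<union> {0<..b})"
    by (rule plus_emeasure) (use assms(1) in auto)
  moreover have "{..<0} \<union> {0} \<union> {0<..b} = {..b}"
    using assms(2) by auto
  ultimately show ?thesis
    by (simp only:)
qed

lemma measure_eqI_nonneg_Ioc:
  fixes M N :: "real measure"
  assumes sets: "sets M = sets borel" "sets N = sets borel"
    and neg: "emeasure M {..<0} = 0" "emeasure N {..<0} = 0"
    and zero: "emeasure M {0} = emeasure N {0}"
    and fin: "\<And>b. emeasure M {..b} \<noteq> \<infinity>"
    and eq: "\<And>a b. 0 < a \<Longrightarrow> a < b \<Longrightarrow> emeasure M {a<..b} = emeasure N {a<..b}"
  shows "M = N"
proof (rule measure_eqI_atMost[OF sets fin])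
  fix b :: real
  have "emeasure M {inverse (real (Suc n))<..b} = emeasure N {inverse (real (Suc n))<..b}" for n
    using eq[of "inverse (real (Suc n))" b] by (cases "inverse (real (Suc n)) < b") auto
  then have Ioc_0: "emeasure M {0<..b} = emeasure N {0<..b}"
    using SUP_emeasure_Ioc_inverse_Suc[OF sets(1), of 0 b] SUP_emeasure_Ioc_inverse_Suc[OF sets(2), of 0 b]
    by simp
  show "emeasure M {..b} = emeasure N {..b}"
  proof (cases "0 \<le> b")
    case True
    then show ?thesis
      using emeasure_atMost_split[OF sets(1)] emeasure_atMost_split[OF sets(2)] neg zero Ioc_0 by simp
  next
    case False
    then have "emeasure K {..b} \<le> emeasure K {..<0}" if "sets K = sets borel" for K :: "real measure"
      using that by (intro emeasure_mono) auto
    then show ?thesis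
      using neg sets by (metis le_zero_eq)
  qed
qed

locale laplace_measure_pair = M: laplace_measure M c + N: laplace_measure N c
  for M N :: "real measure" and c :: real +
  assumes laplace_eq: "c < s \<Longrightarrow> laplace M s = laplace N s"
begin

lemma widder_coeff_eq: "c < s \<Longrightarrow> widder_coeff M n s = widder_coeff N n s"
  unfolding widder_coeff_def
  by (subst higher_deriv_cong_open[where S="{c<..}" and g="laplace N"]) (auto simp: laplace_eq)

(* Both window integrals are the same Post--Widder sum. *)
lemma measure_Ioo_le_Icc:
  assumes "0 \<le> p" "p \<le> q"
  shows "measure M {p<..<q} \<le> measure N {p..q}"
proof (rule tendsto_le[OF sequentially_bot])
  show "(\<lambda>j. \<integral>t. window_weight p q (real j) t * indicator {p<..<q} t \<partial>M) \<longlonglongrightarrow> measure M {p<..<q}"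
    by (rule M.tendsto_integral_window_weight_inside[OF assms])
  show "(\<lambda>j. measure N {p..q} + (\<integral>t. window_weight p q (real j) t * indicator (- {p..q}) t \<partial>N))
      \<longlonglongrightarrow> measure N {p..q}"
    using tendsto_add[OF tendsto_const N.tendsto_integral_window_weight_outside[OF assms]] by simp
  have "eventually (\<lambda>j. 4 * (c + 1) \<le> real j) sequentially"
    by (rule eventually_compose_filterlim[OF eventually_ge_at_top filterlim_real_sequentially])
  then show "eventually (\<lambda>j. (\<integral>t. window_weight p q (real j) t * indicator {p<..<q} t \<partial>M)
      \<le> measure N {p..q} + (\<integral>t. window_weight p q (real j) t * indicator (- {p..q}) t \<partial>N)) sequentially"
  proof eventually_elim
    case (elim j)
    have "c < real j" using elim M.abscissa_nonneg by (simp add: ring_distribs)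
    have q: "0 \<le> q" using assms by simp
    have "(\<integral>t. window_weight p q (real j) t * indicator {p<..<q} t \<partial>M) \<le> (\<integral>t. window_weight p q (real j) t \<partial>M)"
      by (rule M.integral_window_weight_restrict_le[OF q elim]) simp
    also have "\<dots> = (\<integral>t. window_weight p q (real j) t \<partial>N)"
      using \<open>c < real j\<close> by (simp add: M.integral_window_weight N.integral_window_weight widder_coeff_eq)
    also have "\<dots> \<le> measure N {p..q} + (\<integral>t. window_weight p q (real j) t * indicator (- {p..q}) t \<partial>N)"
      by (rule N.integral_window_weight_le[OF q elim])
    finally show ?case .
  qed
qed

lemma measure_Ioc_le_Icc:
  assumes "0 \<le> a" "a \<le> b"
  shows "measure M {a<..b} \<le> measure N {a..b}"
proof (rule LIMSEQ_le_const)
  let ?A = "\<lambda>n. {a..b + inverse (real (Suc n))}"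
  have "(\<lambda>n. measure N (?A n)) \<longlonglongrightarrow> measure N (\<Inter>n. ?A n)"
  proof (rule Lim_measure_decseq[OF _ decseq_Icc_inverse_Suc])
    show "emeasure N (?A n) \<noteq> \<infinity>" for n
      by (rule N.emeasure_bounded_above_finite) auto
  qed (auto simp: N.sets_M)
  then show "(\<lambda>n. measure N (?A n)) \<longlonglongrightarrow> measure N {a..b}"
    by (simp only: Inter_Icc_inverse_Suc)
  show "\<exists>N0. \<forall>n\<ge>N0. measure M {a<..b} \<le> measure N (?A n)"
  proof (intro exI allI impI)
    fix n :: nat
    have "measure M {a<..b} \<le> measure M {a<..<b + e}" if "0 < e" "e \<le> 1" for e
      using that by (intro M.measure_mono_bounded_above[of _ _ "b + 1"]) auto
    then have "measure M {a<..b} \<le> measure M {a<..<b + inverse (real (Suc n))}"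
      by (simp add: inverse_le_1_iff)
    also have "\<dots> \<le> measure N (?A n)"
      using assms by (intro measure_Ioo_le_Icc add_increasing2) auto
    finally show "measure M {a<..b} \<le> measure N (?A n)" .
  qed
qed

lemma measure_Ioc_le:
  assumes "0 \<le> a"
  shows "measure M {a<..b} \<le> measure N {a<..b}"
proof (rule LIMSEQ_le_const2)
  let ?A = "\<lambda>n. {a + inverse (real (Suc n))<..b}"
  have "(\<lambda>n. measure M (?A n)) \<longlonglongrightarrow> measure M (\<Union>n. ?A n)"
  proof (rule Lim_measure_incseq[OF _ incseq_Ioc_inverse_Suc])
    show "emeasure M (\<Union>n. ?A n) \<noteq> \<infinity>"
      by (rule M.emeasure_bounded_above_finite) auto
  qed (auto simp: M.sets_M)
  then show "(\<lambda>n. measure M (?A n)) \<longlonglongrightarrow> measure M {a<..b}"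
    by (simp only: Union_Ioc_inverse_Suc)
  show "\<exists>N0. \<forall>n\<ge>N0. measure M (?A n) \<le> measure N {a<..b}"
  proof (intro exI allI impI)
    fix n :: nat
    define a' where "a' = a + inverse (real (Suc n))"
    have a': "0 \<le> a'" "a < a'"
      using assms by (simp_all add: a'_def add_increasing2)
    show "measure M (?A n) \<le> measure N {a<..b}"
    proof (cases "a' \<le> b")
      case True
      have "measure M {a'<..b} \<le> measure N {a'..b}"
        using a'(1) True by (rule measure_Ioc_le_Icc)
      also have "\<dots> \<le> measure N {a<..b}"
        using a' by (intro N.measure_mono_bounded_above[of _ _ b]) auto
      finally show ?thesis
        by (simp add: a'_def)
    next
      case False
      then have "?A n = {}"
        by (auto simp: a'_def)
      then show ?thesis
        by simp
    qed
  qed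
qed

end

lemma laplace_measure_unique:
  assumes "laplace_measure M c" "laplace_measure N c" "\<And>s. c < s \<Longrightarrow> laplace M s = laplace N s"
  shows "M = N"
proof -
  interpret MN: laplace_measure_pair M N c
    using assms by (simp add: laplace_measure_pair_def laplace_measure_pair_axioms_def)
  interpret NM: laplace_measure_pair N M c
    using assms by (simp add: laplace_measure_pair_def laplace_measure_pair_axioms_def)
  have "measure M {a<..b} = measure N {a<..b}" if "0 \<le> a" for a b
    using that by (intro antisym MN.measure_Ioc_le NM.measure_Ioc_le)
  moreover have "{a<..b} \<subseteq> {..b}" for a b :: real
    by auto
  ultimately have Ioc: "emeasure M {a<..b} = emeasure N {a<..b}" if "0 < a" for a b
    using that MN.M.emeasure_eq_measure_bounded_above[of "{a<..b}" b]
      MN.N.emeasure_eq_measure_bounded_above[of "{a<..b}" b] by simp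
  have "eventually (\<lambda>j. c < real j) sequentially"
    by (rule eventually_compose_filterlim[OF eventually_gt_at_top filterlim_real_sequentially])
  then have "eventually (\<lambda>j. laplace M (real j) = laplace N (real j)) sequentially"
    by eventually_elim (rule assms(3))
  with MN.M.tendsto_laplace_at_top have "(\<lambda>j. laplace N (real j)) \<longlonglongrightarrow> measure M {0}"
    by (rule Lim_transform_eventually)
  with MN.N.tendsto_laplace_at_top have "measure M {0} = measure N {0}"
    by (rule LIMSEQ_unique[rotated])
  then have zero: "emeasure M {0} = emeasure N {0}"
    using MN.M.emeasure_eq_measure_bounded_above[of "{0}" 0]
      MN.N.emeasure_eq_measure_bounded_above[of "{0}" 0] by simp
  show ?thesis
    using MN.M.sets_M MN.N.sets_M MN.M.emeasure_negative MN.N.emeasure_negative zero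
      MN.M.emeasure_atMost_finite Ioc
    by (rule measure_eqI_nonneg_Ioc)
qed

section \<open>Measures with a concave distribution function\<close>

context
  fixes F G :: "real \<Rightarrow> real \<Rightarrow> real" and \<phi> :: "real \<Rightarrow> real"
  assumes F_add: "\<And>a b c. 0 < a \<Longrightarrow> a < b \<Longrightarrow> b < c \<Longrightarrow> F a c = F a b + F b c"
    and G_add: "\<And>a b c. 0 < a \<Longrightarrow> a < b \<Longrightarrow> b < c \<Longrightarrow> G a c = G a b + G b c"
    and F_bounds: "\<And>a h. 0 < a \<Longrightarrow> 0 < h \<Longrightarrow> h * \<phi> (a + h) \<le> F a (a + h) \<and> F a (a + h) \<le> h * \<phi> a"
    and G_bounds: "\<And>a h. 0 < a \<Longrightarrow> 0 < h \<Longrightarrow> h * \<phi> (a + h) \<le> G a (a + h) \<and> G a (a + h) \<le> h * \<phi> a"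
begin

lemma squeezed_interval_functions_piece:
  "0 < a \<Longrightarrow> 0 < h \<Longrightarrow> \<bar>F a (a + h) - G a (a + h)\<bar> \<le> h * (\<phi> a - \<phi> (a + h))"
  using F_bounds[of a h] G_bounds[of a h] unfolding right_diff_distrib by linarith

lemma squeezed_interval_functions_telescope:
  assumes "0 < x" "0 < h"
  shows "\<bar>F x (x + real (Suc k) * h) - G x (x + real (Suc k) * h)\<bar> \<le> h * (\<phi> x - \<phi> (x + real (Suc k) * h))"
proof (induction k)
  case 0
  show ?case
    using squeezed_interval_functions_piece[OF assms] by simp
next
  case (Suc k)
  define a where "a = x + real (Suc k) * h"
  have "0 < real (Suc k) * h"
    using assms(2) by simp
  then have a: "x < a" "0 < a" "x + real (Suc (Suc k)) * h = a + h"
    using assms(1) by (simp_all add: a_def algebra_simps)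
  have "F x (a + h) - G x (a + h) = (F x a - G x a) + (F a (a + h) - G a (a + h))"
    using a assms F_add[of x a "a + h"] G_add[of x a "a + h"] by simp
  then have "\<bar>F x (a + h) - G x (a + h)\<bar> \<le> \<bar>F x a - G x a\<bar> + \<bar>F a (a + h) - G a (a + h)\<bar>"
    by (simp add: abs_triangle_ineq)
  also have "\<dots> \<le> h * (\<phi> x - \<phi> a) + h * (\<phi> a - \<phi> (a + h))"
    using Suc.IH squeezed_interval_functions_piece[OF a(2) assms(2)] unfolding a_def by (rule add_mono)
  also have "\<dots> = h * (\<phi> x - \<phi> (a + h))"
    by (simp add: algebra_simps)
  finally show ?case
    unfolding a(3) .
qed

lemma squeezed_interval_functions_eq:
  assumes \<phi>_nonneg: "\<And>t. 0 < t \<Longrightarrow> 0 \<le> \<phi> t" and "0 < x" "x < y"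
  shows "F x y = G x y"
proof -
  have "\<bar>F x y - G x y\<bar> \<le> (y - x) * \<phi> x / real (Suc m)" for m
  proof -
    define h where "h = (y - x) / real (Suc m)"
    have h: "0 < h" "x + real (Suc m) * h = y"
      using assms(3) by (simp_all add: h_def)
    have "\<bar>F x y - G x y\<bar> \<le> h * (\<phi> x - \<phi> y)"
      using squeezed_interval_functions_telescope[OF assms(2) h(1), of m] unfolding h(2) .
    also have "\<dots> \<le> h * \<phi> x"
      using h \<phi>_nonneg[of y] assms(2,3) by (intro mult_left_mono) auto
    finally show ?thesis
      by (simp add: h_def)
  qed
  moreover have "(\<lambda>m. (y - x) * \<phi> x / real (Suc m)) \<longlonglongrightarrow> 0"
    using lim_const_over_n[of "(y - x) * \<phi> x"] by (rule LIMSEQ_Suc)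
  ultimately have "\<bar>F x y - G x y\<bar> \<le> 0"
    by (intro LIMSEQ_le_const[where X="\<lambda>m. (y - x) * \<phi> x / real (Suc m)"]) auto
  then show ?thesis
    by simp
qed

end

locale concave_mass =
  fixes D :: "real \<Rightarrow> real \<Rightarrow> real"
  assumes mass_nonneg: "0 < a \<Longrightarrow> a < b \<Longrightarrow> 0 \<le> D a b"
    and mass_add: "0 < a \<Longrightarrow> a < b \<Longrightarrow> b < c \<Longrightarrow> D a c = D a b + D b c"
    and mass_concave: "0 < x \<Longrightarrow> x < y \<Longrightarrow> y < z \<Longrightarrow> (y - x) * D y z \<le> (z - y) * D x y"
begin

definition mean_density :: "real \<Rightarrow> real \<Rightarrow> real" where
  "mean_density a b = D a b / (b - a)"

(* The left derivative of the distribution function. For t \<le> 0 it is the junk value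
   Inf {}, hence the indicator in mass_measure. *)
definition mass_density :: "real \<Rightarrow> real" where
  "mass_density t = Inf ((\<lambda>s. mean_density s t) ` {0<..<t})"

definition mass_measure :: "real measure" where
  "mass_measure = density lborel (\<lambda>t. ennreal (indicator {0<..} t * mass_density t))"

lemma mean_density_antimono: "0 < x \<Longrightarrow> x < y \<Longrightarrow> y < z \<Longrightarrow> mean_density y z \<le> mean_density x y"
  using mass_concave[of x y z] by (simp add: mean_density_def field_simps)

lemma mean_density_nonneg: "0 < a \<Longrightarrow> a < b \<Longrightarrow> 0 \<le> mean_density a b"
  using mass_nonneg[of a b] by (simp add: mean_density_def)

lemma mass_density_le: "0 < s \<Longrightarrow> s < t \<Longrightarrow> mass_density t \<le> mean_density s t"
  unfolding mass_density_def
  by (rule cInf_lower) (auto intro!: bdd_belowI[where m=0] mean_density_nonneg)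

lemma mean_density_le: "0 < s \<Longrightarrow> s < t \<Longrightarrow> mean_density s t \<le> mass_density s"
  unfolding mass_density_def by (rule cInf_greatest) (auto intro: mean_density_antimono)

lemma mass_density_nonneg: "0 < t \<Longrightarrow> 0 \<le> mass_density t"
  unfolding mass_density_def by (rule cInf_greatest) (auto intro: mean_density_nonneg)

lemma mass_density_antimono: "0 < s \<Longrightarrow> s \<le> t \<Longrightarrow> mass_density t \<le> mass_density s"
  using mass_density_le[of s t] mean_density_le[of s t] by (cases "s = t") auto

lemma mass_density_bounds_mass:
  assumes "0 < a" "0 < h"
  shows "h * mass_density (a + h) \<le> D a (a + h)" "D a (a + h) \<le> h * mass_density a"
proof -
  have "D a (a + h) = h * mean_density a (a + h)"
    using assms by (simp add: mean_density_def)
  moreover have "mass_density (a + h) \<le> mean_density a (a + h)" "mean_density a (a + h) \<le> mass_density a"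
    using assms by (auto intro: mass_density_le mean_density_le)
  ultimately show "h * mass_density (a + h) \<le> D a (a + h)" "D a (a + h) \<le> h * mass_density a"
    using assms by (auto intro: mult_left_mono)
qed

lemma borel_measurable_mass_density [measurable]:
  "(\<lambda>t. indicator {0<..} t * mass_density t) \<in> borel_measurable borel"
proof -
  have "(\<lambda>t. - (indicator {0<..} t * mass_density t)) \<in> borel_measurable borel"
  proof (rule borel_measurable_piecewise_mono[where C="{{..0}, {0<..}}"])
    fix C :: "real set" assume "C \<in> {{..0}, {0<..}}"
    then show "mono_on C (\<lambda>t. - (indicator {0<..} t * mass_density t))"
      by (auto simp: mono_on_def intro: mass_density_antimono)
  qed auto
  then show ?thesis by simp
qed

lemma sets_mass_measure [simp]: "sets mass_measure = sets borel"
  by (simp add: mass_measure_def)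

lemma emeasure_mass_measure_Ioc_bounds:
  assumes "0 < a" "0 < h"
  shows "emeasure mass_measure {a<..a + h} \<le> ennreal (h * mass_density a)"
    "ennreal (h * mass_density (a + h)) \<le> emeasure mass_measure {a<..a + h}"
proof -
  have "emeasure mass_measure {a<..a + h}
      = (\<integral>\<^sup>+t. ennreal (indicator {0<..} t * mass_density t) * indicator {a<..a + h} t \<partial>lborel)"
    unfolding mass_measure_def by (rule emeasure_density) auto
  also have "\<dots> = (\<integral>\<^sup>+t. ennreal (mass_density t) * indicator {a<..a + h} t \<partial>lborel)"
    using assms by (intro nn_integral_cong) (auto simp: indicator_def)
  finally have eq: "emeasure mass_measure {a<..a + h} = \<dots>" .
  have "(\<integral>\<^sup>+t. ennreal (mass_density t) * indicator {a<..a + h} t \<partial>lborel)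
      \<le> (\<integral>\<^sup>+t. ennreal (mass_density a) * indicator {a<..a + h} t \<partial>lborel)"
    using assms by (intro nn_integral_mono) (auto simp: indicator_def intro!: ennreal_leI mass_density_antimono)
  also have "\<dots> = ennreal (h * mass_density a)"
    using assms mass_density_nonneg[of a] by (simp add: nn_integral_cmult_indicator ennreal_mult' mult.commute)
  finally show "emeasure mass_measure {a<..a + h} \<le> ennreal (h * mass_density a)"
    unfolding eq .
  have "ennreal (h * mass_density (a + h)) = (\<integral>\<^sup>+t. ennreal (mass_density (a + h)) * indicator {a<..a + h} t \<partial>lborel)"
    using assms mass_density_nonneg[of "a + h"] by (simp add: nn_integral_cmult_indicator ennreal_mult' mult.commute)
  also have "\<dots> \<le> (\<integral>\<^sup>+t. ennreal (mass_density t) * indicator {a<..a + h} t \<partial>lborel)"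
    using assms by (intro nn_integral_mono) (auto simp: indicator_def intro!: ennreal_leI mass_density_antimono)
  finally show "ennreal (h * mass_density (a + h)) \<le> emeasure mass_measure {a<..a + h}"
    unfolding eq .
qed

lemma emeasure_mass_measure_Ioc_finite:
  assumes "0 < a" "a < b"
  shows "emeasure mass_measure {a<..b} \<noteq> \<infinity>"
  using emeasure_mass_measure_Ioc_bounds(1)[of a "b - a"] assms by (auto simp: top_unique)

lemma measure_mass_measure_Ioc_bounds:
  assumes "0 < a" "0 < h"
  shows "h * mass_density (a + h) \<le> measure mass_measure {a<..a + h} \<and> measure mass_measure {a<..a + h} \<le> h * mass_density a"
proof -
  have "emeasure mass_measure {a<..a + h} = ennreal (measure mass_measure {a<..a + h})"
    using emeasure_mass_measure_Ioc_finite[of a "a + h"] assms by (intro emeasure_eq_ennreal_measure) auto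
  then show ?thesis
    using emeasure_mass_measure_Ioc_bounds[OF assms] assms mass_density_nonneg[of a] mass_density_nonneg[of "a + h"]
    by (simp add: ennreal_le_iff)
qed

lemma emeasure_mass_measure_Ioc:
  assumes "0 < a" "a < b"
  shows "emeasure mass_measure {a<..b} = ennreal (D a b)"
proof -
  have "measure mass_measure {a<..b} = D a b"
  proof (rule squeezed_interval_functions_eq[where F="\<lambda>a b. measure mass_measure {a<..b}" and G=D
        and \<phi>=mass_density])
    show "measure mass_measure {a<..c} = measure mass_measure {a<..b} + measure mass_measure {b<..c}"
      if "0 < a" "a < b" "b < c" for a b c
    proof -
      have "{a<..c} = {a<..b} \<union> {b<..c}"
        using that by auto
      then show ?thesis
        using that emeasure_mass_measure_Ioc_finite[of a b] emeasure_mass_measure_Ioc_finite[of b c]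
        by (simp add: measure_Union)
    qed
    show "D a c = D a b + D b c" if "0 < a" "a < b" "b < c" for a b c
      using that by (rule mass_add)
    show "h * mass_density (a + h) \<le> D a (a + h) \<and> D a (a + h) \<le> h * mass_density a"
      if "0 < a" "0 < h" for a h
      using mass_density_bounds_mass[OF that] by simp
    show "h * mass_density (a + h) \<le> measure mass_measure {a<..a + h} \<and> measure mass_measure {a<..a + h} \<le> h * mass_density a"
      if "0 < a" "0 < h" for a h
      using that by (rule measure_mass_measure_Ioc_bounds)
  qed (use assms mass_density_nonneg in auto)
  then show ?thesis
    using emeasure_mass_measure_Ioc_finite[OF assms] by (simp add: emeasure_eq_ennreal_measure)
qed

lemma emeasure_mass_measure_nonpos: "emeasure mass_measure {..0} = 0"
proof -
  have "emeasure mass_measure {..0}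
      = (\<integral>\<^sup>+t. ennreal (indicator {0<..} t * mass_density t) * indicator {..0} t \<partial>lborel)"
    unfolding mass_measure_def by (rule emeasure_density) auto
  also have "(\<lambda>t. ennreal (indicator {0<..} t * mass_density t) * indicator {..0} t) = (\<lambda>t. 0)"
    by (auto simp: indicator_def)
  finally show ?thesis
    by simp
qed

lemma has_density_on_pos_mass_measure:
  "has_density_on_pos mass_measure (\<lambda>t. indicator {0<..} t * mass_density t)"
  unfolding has_density_on_pos_def
proof (intro conjI allI impI)
  show "0 \<le> indicator {0<..} t * mass_density t" if "0 < t" for t
    using that mass_density_nonneg by simp
  have "indicator {0<..} t * (indicator {0<..} t * mass_density t) = (indicator {0<..} t * mass_density t :: real)"
    for t
    by (auto simp: indicator_def)
  then show "mass_measure = density lborel (\<lambda>t. ennreal (indicator {0<..} t * (indicator {0<..} t * mass_density t)))"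
    by (simp only: mass_measure_def)
qed simp

lemma antimono_on_mass_density: "antimono_on {0<..} (\<lambda>t. indicator {0<..} t * mass_density t)"
  by (auto simp: monotone_on_def intro: mass_density_antimono)

end

lemma has_antimono_density_if_concave_mass:
  fixes M :: "real measure"
  assumes sets: "sets M = sets borel" and nonpos: "emeasure M {..0} = 0"
    and fin: "\<And>b. emeasure M {..b} \<noteq> \<infinity>"
    and "concave_mass (\<lambda>a b. measure M {a<..b})"
  shows "\<exists>\<phi>. has_density_on_pos M \<phi> \<and> antimono_on {0<..} \<phi>"
proof -
  interpret concave_mass "\<lambda>a b. measure M {a<..b}" by fact
  have nonpos_null: "emeasure K A = 0"
    if "sets K = sets borel" "emeasure K {..0} = 0" "A \<subseteq> {..0}" for K :: "real measure" and A
    using emeasure_mono[of A "{..0}" K] that by simp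
  have M_eq: "M = mass_measure"
  proof (rule measure_eqI_nonneg_Ioc[OF sets sets_mass_measure])
    show "emeasure M {..<0} = 0"
      by (rule nonpos_null[OF sets nonpos]) auto
    show "emeasure mass_measure {..<0} = 0"
      by (rule nonpos_null[OF sets_mass_measure emeasure_mass_measure_nonpos]) auto
    show "emeasure M {0} = emeasure mass_measure {0}"
      using nonpos_null[OF sets nonpos, of "{0}"]
        nonpos_null[OF sets_mass_measure emeasure_mass_measure_nonpos, of "{0}"] by simp
    show "emeasure M {a<..b} = emeasure mass_measure {a<..b}" if "0 < a" "a < b" for a b
    proof -
      have "emeasure M {a<..b} \<le> emeasure M {..b}"
        using sets by (intro emeasure_mono) auto
      then have "emeasure M {a<..b} \<noteq> \<top>"
        using fin[of b] by (auto simp: top_unique)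
      then have "emeasure M {a<..b} = ennreal (measure M {a<..b})"
        by (rule emeasure_eq_ennreal_measure)
      then show ?thesis
        using emeasure_mass_measure_Ioc[OF that] by simp
    qed
  qed (rule fin)
  have "has_density_on_pos M (\<lambda>t. indicator {0<..} t * mass_density t)"
    using has_density_on_pos_mass_measure unfolding M_eq[symmetric] .
  with antimono_on_mass_density show ?thesis
    by blast
qed

section \<open>Decreasing Post--Widder coefficients\<close>

lemma card_mult_sum_le_of_separated:
  fixes f :: "'a \<Rightarrow> real"
  assumes "\<And>i. i \<in> I \<Longrightarrow> x \<le> f i" "\<And>j. j \<in> J \<Longrightarrow> f j \<le> x"
  shows "real (card I) * sum f J \<le> real (card J) * sum f I"
proof -
  have "real (card I) * sum f J \<le> real (card I) * (real (card J) * x)"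
    by (intro mult_left_mono sum_bounded_above assms(2)) auto
  also have "\<dots> = real (card J) * (real (card I) * x)"
    by simp
  also have "\<dots> \<le> real (card J) * sum f I"
    by (intro mult_left_mono sum_bounded_below assms(1)) auto
  finally show ?thesis .
qed

lemma card_window_mult_sum_le:
  fixes f :: "nat \<Rightarrow> real"
  assumes "decseq f"
  shows "real (card (window x y l)) * (\<Sum>n\<in>window y z l. f n) \<le> real (card (window y z l)) * (\<Sum>n\<in>window x y l. f n)"
proof (rule card_mult_sum_le_of_separated[where x="f (nat \<lceil>y * l\<rceil>)"])
  show "f (nat \<lceil>y * l\<rceil>) \<le> f n" if "n \<in> window x y l" for n
    using that by (intro decseqD[OF assms]) (auto simp: window_def)
  show "f n \<le> f (nat \<lceil>y * l\<rceil>)" if "n \<in> window y z l" for n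
    using that by (intro decseqD[OF assms]) (auto simp: window_def)
qed

context laplace_measure
begin

lemma measure_Ioo_eq_Ioc:
  assumes "emeasure M {q} = 0" "p < q"
  shows "measure M {p<..<q} = measure M {p<..q}"
proof -
  have "{q} \<in> null_sets M"
    using assms(1) by (simp add: null_sets_def sets_M)
  then have "emeasure M ({p<..<q} \<union> {q}) = emeasure M {p<..<q}"
    by (rule emeasure_Un_null_set[rotated]) (simp add: sets_M)
  moreover have "{p<..<q} \<union> {q} = {p<..q}"
    using assms(2) by auto
  ultimately show ?thesis
    by (simp add: measure_def)
qed

lemma measure_Ioc_add:
  assumes "x \<le> y" "y \<le> z"
  shows "measure M {x<..z} = measure M {x<..y} + measure M {y<..z}"
proof -
  have "{x<..z} = {x<..y} \<union> {y<..z}" "{x<..y} \<subseteq> {..z}" "{y<..z} \<subseteq> {..z}"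
    using assms by auto
  then show ?thesis
    using emeasure_bounded_above_finite by (simp add: measure_Union sets_M)
qed

lemma tendsto_sum_widder_coeff:
  assumes "0 \<le> p" "p < q" "emeasure M {p} = 0" "emeasure M {q} = 0"
  shows "(\<lambda>j. \<Sum>n\<in>window p q (real j). widder_coeff M n (real j)) \<longlonglongrightarrow> measure M {p<..q}"
proof (rule Lim_transform_eventually)
  show "(\<lambda>j. \<integral>t. window_weight p q (real j) t \<partial>M) \<longlonglongrightarrow> measure M {p<..q}"
    using tendsto_integral_window_weight[of p q] measure_Ioo_eq_Ioc[of q p] assms by simp
  have "eventually (\<lambda>j. c < real j) sequentially"
    by (rule eventually_compose_filterlim[OF eventually_gt_at_top filterlim_real_sequentially])
  then show "eventually (\<lambda>j. (\<integral>t. window_weight p q (real j) t \<partial>M)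
      = (\<Sum>n\<in>window p q (real j). widder_coeff M n (real j))) sequentially"
    by eventually_elim (rule integral_window_weight)
qed

(* The windows [x j, y j) and [y j, z j) meet at \<lceil>y j\<rceil>, so decreasing coefficients make their
   sums compare like their sizes; dividing by j and letting j \<rightarrow> \<infinity> gives concavity. *)
lemma concave_mass_if_widder_coeff_antimono:
  assumes atoms: "\<And>x. emeasure M {x} = 0"
    and antimono: "\<And>n s. s0 < s \<Longrightarrow> widder_coeff M (Suc n) s \<le> widder_coeff M n s"
  shows "concave_mass (\<lambda>a b. measure M {a<..b})"
proof
  show "measure M {x<..z} = measure M {x<..y} + measure M {y<..z}" if "0 < x" "x < y" "y < z" for x y z
    using that by (intro measure_Ioc_add) auto
  fix x y z :: real assume xyz: "0 < x" "x < y" "y < z"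
  let ?S = "\<lambda>p q j. \<Sum>n\<in>window p q (real j). widder_coeff M n (real j)"
  let ?card = "\<lambda>p q j. real (card (window p q (real j)))"
  have lim: "(\<lambda>j. ?card p q j / real j * ?S p' q' j) \<longlonglongrightarrow> (q - p) * measure M {p'<..q'}"
    if "0 \<le> p" "p < q" "0 \<le> p'" "p' < q'" for p q p' q'
    using that by (intro tendsto_mult tendsto_card_window tendsto_sum_widder_coeff atoms) auto
  show "(y - x) * measure M {y<..z} \<le> (z - y) * measure M {x<..y}"
  proof (rule tendsto_le[OF sequentially_bot lim[of y z x y] lim[of x y y z]])
    have "eventually (\<lambda>j. s0 < real j) sequentially"
      by (rule eventually_compose_filterlim[OF eventually_gt_at_top filterlim_real_sequentially])
    then show "eventually (\<lambda>j. ?card x y j / real j * ?S y z j \<le> ?card y z j / real j * ?S x y j) sequentially"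
    proof eventually_elim
      case (elim j)
      have "decseq (\<lambda>n. widder_coeff M n (real j))"
        using antimono[OF elim] by (rule decseq_SucI)
      then have "?card x y j * ?S y z j \<le> ?card y z j * ?S x y j"
        by (rule card_window_mult_sum_le)
      then show ?case
        by (simp add: divide_right_mono field_simps)
    qed
  qed (use xyz in auto)
qed simp

end

section \<open>Representing measures and exponential tilting\<close>

lemma rep_measure_laplace_measure:
  assumes "rep_measure f \<mu>"
  shows "laplace_measure \<mu> 0" "\<And>s. 0 < s \<Longrightarrow> laplace \<mu> s = f s"
  using assms by (auto simp: rep_measure_def laplace_def intro!: laplace_measure.intro)

lemma has_density_on_pos_emeasure_nonpos:
  assumes "has_density_on_pos M \<phi>" "A \<subseteq> {..0}" "A \<in> sets borel"
  shows "emeasure M A = 0"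
proof -
  have [measurable]: "\<phi> \<in> borel_measurable borel"
    using assms(1) by (simp add: has_density_on_pos_def)
  have "emeasure M A = (\<integral>\<^sup>+t. ennreal (indicator {0<..} t * \<phi> t) * indicator A t \<partial>lborel)"
    using assms(1,3) by (simp add: has_density_on_pos_def emeasure_density)
  also have "(\<lambda>t. ennreal (indicator {0<..} t * \<phi> t) * indicator A t) = (\<lambda>t. 0)"
  proof
    fix t
    show "ennreal (indicator {0<..} t * \<phi> t) * indicator A t = 0"
      using assms(2) by (cases "t \<in> A") (auto simp: indicator_def)
  qed
  finally show ?thesis
    by simp
qed

lemma has_density_on_pos_emeasure_singleton:
  assumes "has_density_on_pos M \<phi>"
  shows "emeasure M {x} = 0"
proof -
  have [measurable]: "\<phi> \<in> borel_measurable borel"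
    using assms by (simp add: has_density_on_pos_def)
  have "emeasure M {x} = (\<integral>\<^sup>+t. ennreal (indicator {0<..} t * \<phi> t) * indicator {x} t \<partial>lborel)"
    using assms by (simp add: has_density_on_pos_def emeasure_density)
  also have "\<dots> = (\<integral>\<^sup>+t. 0 \<partial>(lborel :: real measure))"
  proof (rule nn_integral_cong_AE)
    show "AE t in lborel. ennreal (indicator {0<..} t * \<phi> t) * indicator {x} t = 0"
      using AE_lborel_singleton[of x] by eventually_elim simp
  qed
  finally show ?thesis
    by simp
qed

lemma has_density_on_pos_density_exp:
  assumes "has_density_on_pos M \<phi>"
  shows "has_density_on_pos (density M (\<lambda>t. ennreal (exp (w * t)))) (\<lambda>t. exp (w * t) * \<phi> t)"
proof -
  have [measurable]: "\<phi> \<in> borel_measurable borel"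
    using assms by (simp add: has_density_on_pos_def)
  have "density M (\<lambda>t. ennreal (exp (w * t)))
      = density lborel (\<lambda>t. ennreal (indicator {0<..} t * \<phi> t) * ennreal (exp (w * t)))"
    using assms unfolding has_density_on_pos_def by (simp add: density_density_eq)
  also have "\<dots> = density lborel (\<lambda>t. ennreal (indicator {0<..} t * (exp (w * t) * \<phi> t)))"
    using assms by (intro density_cong) (auto simp: has_density_on_pos_def indicator_def ennreal_mult' mult.commute)
  finally show ?thesis
    using assms by (simp add: has_density_on_pos_def)
qed

context laplace_measure
begin

lemma laplace_measure_density_exp:
  "laplace_measure (density M (\<lambda>t. ennreal (exp (- w * t)))) (max 0 (c - w))"
proof
  show "emeasure (density M (\<lambda>t. ennreal (exp (- w * t)))) {..<0} = 0"
    using emeasure_negative AE_nonneg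
    by (subst emeasure_density) (auto intro!: nn_integral_zero' elim: eventually_mono simp: indicator_def sets_M)
  show "integrable (density M (\<lambda>t. ennreal (exp (- w * t)))) (\<lambda>t. exp (- s * t))"
    if "max 0 (c - w) < s" for s
  proof -
    have "integrable M (\<lambda>t. exp (- (s + w) * t))"
      using that by (intro integrable_exp) simp
    then show ?thesis
      by (subst integrable_density) (auto simp: mult_exp_exp algebra_simps)
  qed
qed (auto simp: sets_M)

lemma laplace_density_exp:
  assumes "c < s + w"
  shows "laplace (density M (\<lambda>t. ennreal (exp (- w * t)))) s = laplace M (s + w)"
proof -
  have "laplace (density M (\<lambda>t. ennreal (exp (- w * t)))) s = (\<integral>t. exp (- w * t) *\<^sub>R exp (- s * t) \<partial>M)"
    unfolding laplace_def by (subst integral_density) auto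
  also have "\<dots> = laplace M (s + w)"
    unfolding laplace_def by (intro Bochner_Integration.integral_cong) (auto simp: mult_exp_exp algebra_simps)
  finally show ?thesis .
qed

lemma density_exp_cancel:
  "density (density M (\<lambda>t. ennreal (exp (- w * t)))) (\<lambda>t. ennreal (exp (w * t))) = M"
proof -
  have "density (density M (\<lambda>t. ennreal (exp (- w * t)))) (\<lambda>t. ennreal (exp (w * t)))
      = density M (\<lambda>t. ennreal (exp (- w * t)) * ennreal (exp (w * t)))"
    by (rule density_density_eq) auto
  also have "(\<lambda>t. ennreal (exp (- w * t)) * ennreal (exp (w * t))) = (\<lambda>_. 1)"
    by (auto simp: ennreal_mult[symmetric] mult_exp_exp)
  finally show ?thesis
    by (simp add: density_1)
qed

end

lemma rep_measure_exp_shift: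
  assumes "rep_measure f \<mu>" "rep_measure g \<nu>" "\<And>s. max 0 (- w) < s \<Longrightarrow> g s = f (s + w)"
  shows "\<nu> = density \<mu> (\<lambda>t. ennreal (exp (- w * t)))"
proof -
  interpret \<mu>: laplace_measure \<mu> 0
    using assms(1) by (rule rep_measure_laplace_measure)
  interpret \<nu>: laplace_measure \<nu> 0
    using assms(2) by (rule rep_measure_laplace_measure)
  have "density \<mu> (\<lambda>t. ennreal (exp (- w * t))) = \<nu>"
  proof (rule laplace_measure_unique)
    show "laplace_measure (density \<mu> (\<lambda>t. ennreal (exp (- w * t)))) (max 0 (- w))"
      using \<mu>.laplace_measure_density_exp[of w] by simp
    show "laplace_measure \<nu> (max 0 (- w))"
      by (rule \<nu>.laplace_measure_mono) simp
    show "laplace (density \<mu> (\<lambda>t. ennreal (exp (- w * t)))) s = laplace \<nu> s" if "max 0 (- w) < s" for s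
      using that \<mu>.laplace_density_exp[of s w] assms(3)[OF that]
        rep_measure_laplace_measure(2)[OF assms(1), of "s + w"] rep_measure_laplace_measure(2)[OF assms(2), of s]
      by simp
  qed
  then show ?thesis ..
qed

lemma antimono_density_if_widder_coeff_antimono:
  assumes g: "rep_measure g \<nu>" and d: "has_density_on_pos \<nu> d"
    and antimono: "\<And>n s. s0 < s \<Longrightarrow>
      (- s) ^ Suc n * (deriv ^^ Suc n) g s / fact (Suc n) \<le> (- s) ^ n * (deriv ^^ n) g s / fact n"
  shows "\<exists>\<phi>. has_density_on_pos \<nu> \<phi> \<and> antimono_on {0<..} \<phi>"
proof -
  interpret \<nu>: laplace_measure \<nu> 0
    using g by (rule rep_measure_laplace_measure)
  have coeff: "widder_coeff \<nu> n s = (- s) ^ n * (deriv ^^ n) g s / fact n" if "0 < s" for n s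
    unfolding widder_coeff_def using that rep_measure_laplace_measure(2)[OF g]
    by (subst higher_deriv_cong_open[where S="{0<..}" and g=g]) auto
  have "concave_mass (\<lambda>a b. measure \<nu> {a<..b})"
  proof (rule \<nu>.concave_mass_if_widder_coeff_antimono)
    show "widder_coeff \<nu> (Suc n) s \<le> widder_coeff \<nu> n s" if "max 0 s0 < s" for n s
      using that antimono[of s n] by (simp add: coeff)
  qed (rule has_density_on_pos_emeasure_singleton[OF d])
  then show ?thesis
    by (intro has_antimono_density_if_concave_mass \<nu>.sets_M \<nu>.emeasure_atMost_finite
        has_density_on_pos_emeasure_nonpos[OF d]) auto
qed

theorem corollary3p3:
  fixes f :: "real \<Rightarrow> real"
  defines "w0 \<equiv> real_of_ereal (omega0 f)"
  defines "g \<equiv> (\<lambda>s. f_ext f (s + w0))"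
  assumes "CM f"
    and "omega0 f > -\<infinity>"
    and "\<exists>\<mu> d. rep_measure g \<mu> \<and> has_density_on_pos \<mu> d \<and> (\<forall>t>0. d t > 0)"
    and "\<exists>s0>0. \<forall>n. \<forall>s>s0.
           (-s) ^ n * (deriv ^^ n) g s / fact n
             \<ge> (-s) ^ (Suc n) * (deriv ^^ (Suc n)) g s / fact (Suc n)"
    and "(g \<longlongrightarrow> 0) at_top"
  shows "\<forall>\<mu>. rep_measure f \<mu> \<longrightarrow>
           (\<exists>\<nu>. has_density_on_pos \<mu> \<nu> \<and> antimono_on {0<..} (\<lambda>t. exp (- w0 * t) * \<nu> t))"
proof (intro allI impI)
  fix \<mu> assume \<mu>: "rep_measure f \<mu>"
  obtain \<mu>g d where g: "rep_measure g \<mu>g" and d: "has_density_on_pos \<mu>g d"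
    using assms(5) by blast
  obtain s0 where s0: "\<And>n s. s0 < s \<Longrightarrow>
      (- s) ^ Suc n * (deriv ^^ Suc n) g s / fact (Suc n) \<le> (- s) ^ n * (deriv ^^ n) g s / fact n"
    using assms(6) by blast
  obtain \<phi> where \<phi>: "has_density_on_pos \<mu>g \<phi>" "antimono_on {0<..} \<phi>"
    using antimono_density_if_widder_coeff_antimono[OF g d s0] by blast
  have "\<mu>g = density \<mu> (\<lambda>t. ennreal (exp (- w0 * t)))"
    using \<mu> g by (rule rep_measure_exp_shift) (simp add: g_def f_ext_def)
  then have "has_density_on_pos \<mu> (\<lambda>t. exp (w0 * t) * \<phi> t)"
    using has_density_on_pos_density_exp[OF \<phi>(1), of w0]
      laplace_measure.density_exp_cancel[OF rep_measure_laplace_measure(1)[OF \<mu>], of w0]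
    by simp
  moreover have "(\<lambda>t. exp (- w0 * t) * (exp (w0 * t) * \<phi> t)) = \<phi>"
    by (simp add: mult.assoc[symmetric] mult_exp_exp)
  ultimately show "\<exists>\<nu>. has_density_on_pos \<mu> \<nu> \<and> antimono_on {0<..} (\<lambda>t. exp (- w0 * t) * \<nu> t)"
    using \<phi>(2) by metis
qed

end
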